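(* Let $d\ge1$, $p>1$ and $s\in(0,1)$ with $sp<d$, let $p<q<\frac{p(d-s)}{d-sp}$, and set $r=p\frac{q-1}{p-1}$ and \[ a=\frac{d(q-p)}{(q-1)\big(dp-(d-sp)q\big)}, \] where $\delta:=dp-(d-sp)q>0$. Then there is an optimal (i.e. smallest) constant $\mathscr{L}\in(0,\infty)$ such that for every $u\in\mathcal{D}^{p,q}_s$, \[ \|u\|_{L^r(\mathbb{R}^d)}\le\mathscr{L}\,[u]_{W^{s,p}(\mathbb{R}^d)}^a\,\|u\|_{L^q(\mathbb{R}^d)}^{1-a}. \]
   Context: $[u]_{W^{s,p}(\mathbb{R}^d)}^p=\int_{\mathbb{R}^d}\int_{\mathbb{R}^d}\frac{|u(x)-u(y)|^p}{|x-y|^{d+sp}}dx\,dy$; $W^{s,p}(\mathbb{R}^d)$ is the completion of $C_c^\infty(\mathbb{R}^d)$ under $(\|u\|_{L^p}^p+[u]_{W^{s,p}}^p)^{1/p}$; and $\mathcal{D}^{p,q}_s=(W^{s,p}(\mathbb{R}^d)\cap L^q(\mathbb{R}^d))\setminus\{0\}$. *)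

theory Defs
  imports "HOL-Analysis.Analysis"
begin

fun Ck_fun :: "nat \<Rightarrow> ('a::euclidean_space \<Rightarrow> real) \<Rightarrow> bool" where
  "Ck_fun 0 f = continuous_on UNIV f"
| "Ck_fun (Suc k) f = ((\<forall>x. f differentiable (at x)) \<and>
      (\<forall>v. Ck_fun k (\<lambda>x. frechet_derivative f (at x) v)))"

definition smooth_fun :: "('a::euclidean_space \<Rightarrow> real) \<Rightarrow> bool" where
  "smooth_fun f \<longleftrightarrow> (\<forall>k. Ck_fun k f)"

definition Cc_infty :: "('a::euclidean_space \<Rightarrow> real) set" where
  "Cc_infty = {f. smooth_fun f \<and> compact (closure {x. f x \<noteq> 0})}"

definition Lp_pow :: "real \<Rightarrow> ('a::euclidean_space \<Rightarrow> real) \<Rightarrow> ennreal" where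
  "Lp_pow p u = (\<integral>\<^sup>+ x. ennreal (\<bar>u x\<bar> powr p) \<partial>lborel)"

definition Lp_norm :: "real \<Rightarrow> ('a::euclidean_space \<Rightarrow> real) \<Rightarrow> real" where
  "Lp_norm p u = enn2real (Lp_pow p u) powr (1 / p)"

definition gagliardo_pow :: "real \<Rightarrow> real \<Rightarrow> ('a::euclidean_space \<Rightarrow> real) \<Rightarrow> ennreal" where
  "gagliardo_pow s p u = (\<integral>\<^sup>+ x. \<integral>\<^sup>+ y.
      ennreal (\<bar>u x - u y\<bar> powr p / norm (x - y) powr (real DIM('a) + s * p)) \<partial>lborel \<partial>lborel)"

definition gagliardo :: "real \<Rightarrow> real \<Rightarrow> ('a::euclidean_space \<Rightarrow> real) \<Rightarrow> real" where
  "gagliardo s p u = enn2real (gagliardo_pow s p u) powr (1 / p)"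

text \<open>W^{s,p}(R^d): completion of C_c^infinity under (||u||_p^p + [u]^p)^(1/p), realised
  concretely as the measurable functions of finite norm that are norm-limits of C_c^infinity functions.\<close>
definition Wsp :: "real \<Rightarrow> real \<Rightarrow> ('a::euclidean_space \<Rightarrow> real) set" where
  "Wsp s p = {u. u \<in> borel_measurable lborel \<and> Lp_pow p u < \<infinity> \<and> gagliardo_pow s p u < \<infinity> \<and>
     (\<exists>\<phi>::nat \<Rightarrow> 'a \<Rightarrow> real. (\<forall>n. \<phi> n \<in> Cc_infty) \<and>
        ((\<lambda>n. Lp_pow p (\<lambda>x. \<phi> n x - u x) + gagliardo_pow s p (\<lambda>x. \<phi> n x - u x)) \<longlonglongrightarrow> 0))}"

definition Dpqs :: "real \<Rightarrow> real \<Rightarrow> real \<Rightarrow> ('a::euclidean_space \<Rightarrow> real) set" where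
  "Dpqs p q s = {u. u \<in> Wsp s p \<and> Lp_pow q u < \<infinity> \<and> \<not> (AE x in lborel. u x = 0)}"

end

(* For a bounded function v and every radius rho, averaging |v x| <= |v x - v y| + |v y| over the
   ball B(x, rho) and applying Hoelder's inequality to both terms bounds |v x| by rho^s times a power
   of the x-section of the Gagliardo integral plus rho^(-d/r) times a power of the L^r norm.
   Optimising in rho and integrating in x gives, with kappa = s p / d,
     int |v|^(p + kappa r)  <=  C (int |v|^r)^kappa [v]^p.
   Hoelder interpolation of L^r between L^q and L^(p + kappa r) then bounds int |v|^r by a power of
   itself times powers of the L^q norm and the Gagliardo seminorm; since v is bounded, int |v|^r is
   finite and that power can be absorbed.  Truncation and monotone convergence remove boundedness,
   and for r = p (q - 1) / (p - 1) the resulting exponents are exactly a and 1 - a.  The optimal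
   constant is then the supremum of the quotients over D^{p,q}_s, which is positive because a smooth
   bump function lies in D^{p,q}_s. *)

theory Submission
  imports Defs "HOL-Computational_Algebra.Polynomial" "HOL-Real_Asymp.Real_Asymp"
begin

lemma unit_ball_vol_neq_0 [simp]: "0 \<le> n \<Longrightarrow> unit_ball_vol n \<noteq> 0"
  using unit_ball_vol_pos[of n] by linarith

lemma Youngs_inequality_nonneg:
  fixes a b \<theta> :: real
  assumes "0 \<le> a" "0 \<le> b" "0 < \<theta>" "\<theta> < 1"
  shows "a powr \<theta> * b powr (1 - \<theta>) \<le> \<theta> * a + (1 - \<theta>) * b"
proof (cases "a = 0 \<or> b = 0")
  case True
  with assms show ?thesis by auto
next
  case False
  with assms show ?thesis by (intro Youngs_inequality_0) auto
qed

lemma AE_eq_0_if_nn_integral_le_nonpos: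
  fixes f :: "'b \<Rightarrow> real"
  assumes "f \<in> borel_measurable M" "\<And>x. 0 \<le> f x"
    and "(\<integral>\<^sup>+x. ennreal (f x) \<partial>M) \<le> ennreal A" "A \<le> 0"
  shows "AE x in M. f x = 0"
proof -
  from assms(3,4) have "(\<integral>\<^sup>+x. ennreal (f x) \<partial>M) = 0" by (simp add: ennreal_neg)
  with assms(1,2) show ?thesis by (subst (asm) nn_integral_0_iff_AE) auto
qed

lemma nn_integral_powr_mult_le:
  fixes f g :: "'b \<Rightarrow> real"
  assumes [measurable]: "f \<in> borel_measurable M" "g \<in> borel_measurable M"
    and f: "\<And>x. 0 \<le> f x" and g: "\<And>x. 0 \<le> g x" and \<theta>: "0 < \<theta>" "\<theta> < 1"
    and A: "(\<integral>\<^sup>+x. ennreal (f x) \<partial>M) \<le> ennreal A"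
    and B: "(\<integral>\<^sup>+x. ennreal (g x) \<partial>M) \<le> ennreal B"
  shows "(\<integral>\<^sup>+x. ennreal (f x powr \<theta> * g x powr (1 - \<theta>)) \<partial>M) \<le> ennreal (A powr \<theta> * B powr (1 - \<theta>))"
proof (cases "0 < A \<and> 0 < B")
  case True
  define C where "C = A powr \<theta> * B powr (1 - \<theta>)"
  have C: "0 < C" using True by (simp add: C_def)
  have pointwise: "f x powr \<theta> * g x powr (1 - \<theta>) \<le> C * \<theta> / A * f x + C * (1 - \<theta>) / B * g x" for x
  proof -
    have "f x powr \<theta> * g x powr (1 - \<theta>) = C * ((f x / A) powr \<theta> * (g x / B) powr (1 - \<theta>))"
      using True f g by (simp add: C_def powr_divide)
    also have "\<dots> \<le> C * (\<theta> * (f x / A) + (1 - \<theta>) * (g x / B))"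
      using True f g \<theta> C by (intro mult_left_mono Youngs_inequality_nonneg) auto
    finally show ?thesis by (simp add: algebra_simps)
  qed
  have "(\<integral>\<^sup>+x. ennreal (f x powr \<theta> * g x powr (1 - \<theta>)) \<partial>M)
      \<le> (\<integral>\<^sup>+x. ennreal (C * \<theta> / A) * ennreal (f x) + ennreal (C * (1 - \<theta>) / B) * ennreal (g x) \<partial>M)"
    using pointwise True C \<theta> f g
    by (intro nn_integral_mono) (simp add: ennreal_mult'[symmetric] ennreal_plus[symmetric] ennreal_leI del: ennreal_plus)
  also have "\<dots> = ennreal (C * \<theta> / A) * (\<integral>\<^sup>+x. ennreal (f x) \<partial>M) + ennreal (C * (1 - \<theta>) / B) * (\<integral>\<^sup>+x. ennreal (g x) \<partial>M)"
    by (simp add: nn_integral_add nn_integral_cmult)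
  also have "\<dots> \<le> ennreal (C * \<theta> / A) * ennreal A + ennreal (C * (1 - \<theta>) / B) * ennreal B"
    using A B by (intro add_mono mult_left_mono) auto
  also have "\<dots> = ennreal C"
    using True C \<theta> by (simp add: ennreal_mult'[symmetric] ennreal_plus[symmetric] field_simps del: ennreal_plus)
  finally show ?thesis by (simp add: C_def)
next
  case False
  then have "AE x in M. f x = 0 \<or> g x = 0"
    using AE_eq_0_if_nn_integral_le_nonpos[OF _ f A] AE_eq_0_if_nn_integral_le_nonpos[OF _ g B]
    by (cases "A \<le> 0") (auto elim: eventually_mono)
  then have "(\<integral>\<^sup>+x. ennreal (f x powr \<theta> * g x powr (1 - \<theta>)) \<partial>M) = 0"
    by (subst nn_integral_0_iff_AE) (auto elim!: eventually_mono)
  then show ?thesis by simp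
qed

lemma nn_integral_indicator_le_Holder:
  fixes f :: "'b \<Rightarrow> real"
  assumes [measurable]: "f \<in> borel_measurable M" "B \<in> sets M"
    and f: "\<And>x. 0 \<le> f x" and p: "1 < p" and m: "emeasure M B = ennreal m"
    and J: "(\<integral>\<^sup>+x. ennreal (f x powr p) * indicator B x \<partial>M) \<le> ennreal J"
  shows "(\<integral>\<^sup>+x. ennreal (f x) * indicator B x \<partial>M) \<le> ennreal (m powr (1 - 1/p) * J powr (1/p))"
proof -
  have "(\<integral>\<^sup>+x. ennreal (f x) * indicator B x \<partial>M)
      = (\<integral>\<^sup>+x. ennreal ((f x powr p * indicator B x) powr (1/p) * indicator B x powr (1 - 1/p)) \<partial>M)"
    using f p by (intro nn_integral_cong) (auto simp: indicator_def powr_powr)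
  also have "\<dots> \<le> ennreal (J powr (1/p) * m powr (1 - 1/p))"
    using f p J m by (intro nn_integral_powr_mult_le) (auto simp: ennreal_indicator ennreal_mult')
  finally show ?thesis by (simp add: mult.commute)
qed

lemma powr_le_of_bound_at_all_scales:
  fixes z a b s \<tau> :: real
  assumes z: "0 \<le> z" and a: "0 \<le> a" and b: "0 < b" and s: "0 < s" and \<tau>: "0 < \<tau>"
    and H: "\<And>\<rho>. 0 < \<rho> \<Longrightarrow> z \<le> a * \<rho> powr s + b * \<rho> powr (-\<tau>)"
  shows "z powr (s + \<tau>) \<le> 2 powr (s + \<tau>) * a powr \<tau> * b powr s"
proof (cases "a = 0")
  case True
  have "((\<lambda>\<rho>. b * \<rho> powr (-\<tau>)) \<longlongrightarrow> 0) at_top"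
    using \<tau> by (intro tendsto_mult_right_zero tendsto_neg_powr filterlim_ident) auto
  moreover have "\<forall>\<^sub>F \<rho> in at_top. z \<le> b * \<rho> powr (-\<tau>)"
    using H True by (auto intro: eventually_mono[OF eventually_gt_at_top[of 0]])
  ultimately have "z \<le> 0" by (intro tendsto_le[OF trivial_limit_at_top_linorder _ tendsto_const])
  with z True \<tau> show ?thesis by simp
next
  case False
  with a have a: "0 < a" by simp
  define Q where "Q = a powr (\<tau> / (s + \<tau>)) * b powr (s / (s + \<tau>))"
  define \<rho> where "\<rho> = (b / a) powr (1 / (s + \<tau>))"
  have "ln (a * \<rho> powr s) = ln Q" "ln (b * \<rho> powr (-\<tau>)) = ln Q"
    using a b s \<tau> by (simp_all add: Q_def \<rho>_def ln_mult ln_powr ln_div divide_simps)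
      (simp_all add: algebra_simps)
  then have "a * \<rho> powr s = Q" "b * \<rho> powr (-\<tau>) = Q"
    using a b by (simp_all add: Q_def \<rho>_def ln_inj_iff)
  moreover have "0 < \<rho>" using a b by (simp add: \<rho>_def)
  ultimately have "z \<le> 2 * Q" using H[of \<rho>] by simp
  then have "z powr (s + \<tau>) \<le> (2 * Q) powr (s + \<tau>)"
    using z s \<tau> by (intro powr_mono2) auto
  also have "\<dots> = 2 powr (s + \<tau>) * a powr \<tau> * b powr s"
    using a b s \<tau> by (simp add: Q_def powr_mult powr_powr)
  finally show ?thesis .
qed

lemma le_powr_of_le_mult_powr:
  fixes X B e :: real
  assumes X: "0 < X" and e: "e < 1" and le: "X \<le> B * X powr e"
  shows "X \<le> B powr (1 / (1 - e))"
proof -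
  have "X powr (1 - e) = X / X powr e" using X by (simp add: powr_diff)
  also have "\<dots> \<le> B" using le X by (simp add: divide_le_eq)
  finally have "(X powr (1 - e)) powr (1 / (1 - e)) \<le> B powr (1 / (1 - e))"
    using e by (intro powr_mono2) auto
  then show ?thesis using X e by (simp add: powr_powr)
qed

section \<open>The pointwise estimate on balls\<close>

lemma nn_integral_ball_oscillation_le:
  fixes v :: "'a::euclidean_space \<Rightarrow> real" and p s :: real
  defines "\<beta> \<equiv> real DIM('a) + s * p"
  assumes [measurable]: "v \<in> borel_measurable borel"
    and p: "0 < p" and s: "0 < s" and \<rho>: "0 < \<rho>"
    and G: "(\<integral>\<^sup>+y. ennreal (\<bar>v x - v y\<bar> powr p / norm (x - y) powr \<beta>) \<partial>lborel) \<le> ennreal G"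
  shows "(\<integral>\<^sup>+y. ennreal (\<bar>v x - v y\<bar> powr p) * indicator (ball x \<rho>) y \<partial>lborel) \<le> ennreal (\<rho> powr \<beta> * G)"
proof -
  have pointwise: "\<bar>v x - v y\<bar> powr p \<le> \<rho> powr \<beta> * (\<bar>v x - v y\<bar> powr p / norm (x - y) powr \<beta>)"
    if "y \<in> ball x \<rho>" "y \<noteq> x" for y
  proof -
    have "norm (x - y) powr \<beta> \<le> \<rho> powr \<beta>"
      using that s p by (intro powr_mono2) (auto simp: dist_norm \<beta>_def)
    then show ?thesis using that by (simp add: field_simps mult_right_mono)
  qed
  have "(\<integral>\<^sup>+y. ennreal (\<bar>v x - v y\<bar> powr p) * indicator (ball x \<rho>) y \<partial>lborel)
      \<le> (\<integral>\<^sup>+y. ennreal (\<rho> powr \<beta>) * ennreal (\<bar>v x - v y\<bar> powr p / norm (x - y) powr \<beta>) \<partial>lborel)"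
  proof (rule nn_integral_mono)
    fix y
    show "ennreal (\<bar>v x - v y\<bar> powr p) * indicator (ball x \<rho>) y
        \<le> ennreal (\<rho> powr \<beta>) * ennreal (\<bar>v x - v y\<bar> powr p / norm (x - y) powr \<beta>)"
      using pointwise[of y] by (cases "y \<in> ball x \<rho> \<and> y \<noteq> x")
        (auto simp: indicator_def ennreal_mult'[symmetric] ennreal_leI)
  qed
  also have "\<dots> \<le> ennreal (\<rho> powr \<beta>) * ennreal G"
    using G by (simp add: nn_integral_cmult mult_left_mono)
  finally show ?thesis by (simp add: ennreal_mult')
qed

lemma abs_mult_ball_measure_le:
  fixes v :: "'a::euclidean_space \<Rightarrow> real" and \<rho> :: real
  defines "m \<equiv> unit_ball_vol (real DIM('a)) * \<rho> powr real DIM('a)"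
  assumes [measurable]: "v \<in> borel_measurable borel"
    and p: "1 < p" and r: "1 < r" and \<rho>: "0 < \<rho>" and X: "Lp_pow r v \<le> ennreal X"
    and J: "(\<integral>\<^sup>+y. ennreal (\<bar>v x - v y\<bar> powr p) * indicator (ball x \<rho>) y \<partial>lborel) \<le> ennreal J"
  shows "\<bar>v x\<bar> * m \<le> m powr (1 - 1/p) * J powr (1/p) + m powr (1 - 1/r) * X powr (1/r)"
proof -
  define B where "B = ball x \<rho>"
  have [measurable]: "B \<in> sets borel" by (simp add: B_def)
  have mB: "emeasure lborel B = ennreal m"
    using \<rho> by (simp add: B_def m_def emeasure_ball powr_realpow)
  have "(\<integral>\<^sup>+y. ennreal (\<bar>v y\<bar> powr r) * indicator B y \<partial>lborel) \<le> Lp_pow r v"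
    unfolding Lp_pow_def by (intro nn_integral_mono) (auto simp: indicator_def)
  then have val: "(\<integral>\<^sup>+y. ennreal \<bar>v y\<bar> * indicator B y \<partial>lborel) \<le> ennreal (m powr (1 - 1/r) * X powr (1/r))"
    using mB r X by (intro nn_integral_indicator_le_Holder) auto
  have diff: "(\<integral>\<^sup>+y. ennreal \<bar>v x - v y\<bar> * indicator B y \<partial>lborel) \<le> ennreal (m powr (1 - 1/p) * J powr (1/p))"
    using mB p J by (intro nn_integral_indicator_le_Holder) (auto simp: B_def)
  have "ennreal (\<bar>v x\<bar> * m) = (\<integral>\<^sup>+y. ennreal \<bar>v x\<bar> * indicator B y \<partial>lborel)"
    using mB \<rho> by (simp add: nn_integral_cmult_indicator ennreal_mult m_def)
  also have "\<dots> \<le> (\<integral>\<^sup>+y. ennreal \<bar>v x - v y\<bar> * indicator B y + ennreal \<bar>v y\<bar> * indicator B y \<partial>lborel)"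
    by (intro nn_integral_mono)
      (auto simp: indicator_def ennreal_plus[symmetric] ennreal_leI simp del: ennreal_plus)
  also have "\<dots> = (\<integral>\<^sup>+y. ennreal \<bar>v x - v y\<bar> * indicator B y \<partial>lborel) + (\<integral>\<^sup>+y. ennreal \<bar>v y\<bar> * indicator B y \<partial>lborel)"
    by (rule nn_integral_add) auto
  also have "\<dots> \<le> ennreal (m powr (1 - 1/p) * J powr (1/p) + m powr (1 - 1/r) * X powr (1/r))"
    using add_mono[OF diff val] by (simp add: ennreal_plus)
  finally show ?thesis by (subst (asm) ennreal_le_iff) auto
qed

lemma abs_le_ball_estimate:
  fixes v :: "'a::euclidean_space \<Rightarrow> real"
  defines "d \<equiv> real DIM('a)" and "\<omega> \<equiv> unit_ball_vol (real DIM('a))"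
  assumes [measurable]: "v \<in> borel_measurable borel"
    and p: "1 < p" and s: "0 < s" and r: "1 < r" and \<rho>: "0 < \<rho>"
    and X: "Lp_pow r v \<le> ennreal X" "0 \<le> X"
    and G: "(\<integral>\<^sup>+y. ennreal (\<bar>v x - v y\<bar> powr p / norm (x - y) powr (d + s * p)) \<partial>lborel) \<le> ennreal G"
      "0 \<le> G"
  shows "\<bar>v x\<bar> \<le> \<omega> powr (-1/p) * G powr (1/p) * \<rho> powr s + \<omega> powr (-1/r) * X powr (1/r) * \<rho> powr (-(d/r))"
proof -
  define \<beta> where "\<beta> = d + s * p"
  define m where "m = \<omega> * \<rho> powr d"
  have \<omega>: "0 < \<omega>" by (simp add: \<omega>_def)
  have m: "0 < m" using \<omega> \<rho> by (simp add: m_def)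
  have "\<bar>v x\<bar> * m \<le> m powr (1 - 1/p) * (\<rho> powr \<beta> * G) powr (1/p) + m powr (1 - 1/r) * X powr (1/r)"
    using p r \<rho> X nn_integral_ball_oscillation_le[of v p s \<rho> x G] G s
    unfolding m_def \<omega>_def d_def \<beta>_def by (intro abs_mult_ball_measure_le) auto
  also have "\<dots> = (m powr (-1/p) * (\<rho> powr \<beta> * G) powr (1/p) + m powr (-1/r) * X powr (1/r)) * m"
    using m by (simp add: powr_diff powr_minus field_simps)
  finally have "\<bar>v x\<bar> \<le> m powr (-1/p) * (\<rho> powr \<beta> * G) powr (1/p) + m powr (-1/r) * X powr (1/r)"
    using m by simp
  also have "m powr (-1/p) * (\<rho> powr \<beta> * G) powr (1/p) = \<omega> powr (-1/p) * G powr (1/p) * \<rho> powr s"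
  proof -
    have "-d/p + \<beta>/p = s" using p by (simp add: \<beta>_def field_simps)
    then have "\<rho> powr (-d/p) * \<rho> powr (\<beta>/p) = \<rho> powr s" by (simp add: powr_add[symmetric])
    then show ?thesis using \<omega> \<rho> G by (simp add: m_def powr_mult powr_powr mult_ac)
  qed
  also have "m powr (-1/r) * X powr (1/r) = \<omega> powr (-1/r) * X powr (1/r) * \<rho> powr (-(d/r))"
    using \<omega> \<rho> by (simp add: m_def powr_mult powr_powr mult_ac)
  finally show ?thesis .
qed

lemma abs_powr_le_gagliardo_section:
  fixes v :: "'a::euclidean_space \<Rightarrow> real" and p s :: real
  defines "d \<equiv> real DIM('a)" and "\<omega> \<equiv> unit_ball_vol (real DIM('a))" and "\<kappa> \<equiv> s * p / real DIM('a)"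
  assumes [measurable]: "v \<in> borel_measurable borel"
    and p: "1 < p" and s: "0 < s" and r: "1 < r"
    and X: "Lp_pow r v \<le> ennreal X" "0 < X"
    and G: "(\<integral>\<^sup>+y. ennreal (\<bar>v x - v y\<bar> powr p / norm (x - y) powr (d + s * p)) \<partial>lborel) \<le> ennreal G"
      "0 \<le> G"
  shows "\<bar>v x\<bar> powr (p + \<kappa> * r) \<le> 2 powr (p + \<kappa> * r) * \<omega> powr (-1 - \<kappa>) * G * X powr \<kappa>"
proof -
  define a where "a = \<omega> powr (-1/p) * G powr (1/p)"
  define b where "b = \<omega> powr (-1/r) * X powr (1/r)"
  define \<tau> where "\<tau> = d / r"
  define e where "e = p * r / d"
  have d: "0 < d" by (simp add: d_def)
  have \<omega>: "0 < \<omega>" by (simp add: \<omega>_def)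
  have exps: "(s + \<tau>) * e = p + \<kappa> * r" "\<tau> * e = p" "1/r * (s * e) = \<kappa>"
    using d r by (simp_all add: \<tau>_def e_def \<kappa>_def d_def field_simps)
  have "\<bar>v x\<bar> powr (s + \<tau>) \<le> 2 powr (s + \<tau>) * a powr \<tau> * b powr s"
  proof (rule powr_le_of_bound_at_all_scales)
    show "\<bar>v x\<bar> \<le> a * \<rho> powr s + b * \<rho> powr (-\<tau>)" if "0 < \<rho>" for \<rho>
      using abs_le_ball_estimate[OF _ p s r that X(1) _ G[unfolded d_def]] X G
      by (simp add: a_def b_def \<tau>_def \<omega>_def d_def)
  qed (use X G \<omega> d r s in \<open>auto simp: a_def b_def \<tau>_def\<close>)
  then have "(\<bar>v x\<bar> powr (s + \<tau>)) powr e \<le> (2 powr (s + \<tau>) * a powr \<tau> * b powr s) powr e"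
    using d p r by (intro powr_mono2) (auto simp: e_def)
  also have "\<dots> = 2 powr (p + \<kappa> * r) * a powr p * b powr (s * e)"
    by (simp add: powr_mult powr_powr a_def b_def exps)
  also have "a powr p = \<omega> powr (-1) * G"
    using p G by (simp add: a_def powr_mult powr_powr)
  also have "b powr (s * e) = \<omega> powr (-\<kappa>) * X powr \<kappa>"
    by (simp add: b_def powr_mult powr_powr exps(3)[symmetric])
  also have "2 powr (p + \<kappa> * r) * (\<omega> powr (-1) * G) * (\<omega> powr (-\<kappa>) * X powr \<kappa>)
      = 2 powr (p + \<kappa> * r) * \<omega> powr (-1 - \<kappa>) * G * X powr \<kappa>"
    by (simp add: powr_diff powr_minus divide_inverse mult_ac)
  finally show ?thesis by (simp add: powr_powr exps(1))
qed

lemma Lp_pow_le_gagliardo_pow: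
  fixes v :: "'a::euclidean_space \<Rightarrow> real" and p s :: real
  defines "\<kappa> \<equiv> s * p / real DIM('a)"
  assumes [measurable]: "v \<in> borel_measurable borel"
    and p: "1 < p" and s: "0 < s" and r: "1 < r"
    and X: "Lp_pow r v \<le> ennreal X" "0 < X"
  shows "Lp_pow (p + \<kappa> * r) v
    \<le> ennreal (2 powr (p + \<kappa> * r) * unit_ball_vol (real DIM('a)) powr (-1 - \<kappa>) * X powr \<kappa>) * gagliardo_pow s p v"
proof -
  define c where "c = 2 powr (p + \<kappa> * r) * unit_ball_vol (real DIM('a)) powr (-1 - \<kappa>) * X powr \<kappa>"
  define g where "g x = (\<integral>\<^sup>+y. ennreal (\<bar>v x - v y\<bar> powr p / norm (x - y) powr (real DIM('a) + s * p)) \<partial>lborel)"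
    for x
  have c: "0 < c" using X by (simp add: c_def)
  have "ennreal (\<bar>v x\<bar> powr (p + \<kappa> * r)) \<le> ennreal c * g x" for x
  proof (cases "g x")
    case (real G)
    then have "\<bar>v x\<bar> powr (p + \<kappa> * r) \<le> c * G"
      using abs_powr_le_gagliardo_section[OF _ p s r X, of x G] by (simp add: g_def c_def \<kappa>_def mult_ac)
    then show ?thesis using real c by (simp add: ennreal_mult[symmetric] ennreal_leI)
  qed (use c in \<open>simp add: ennreal_mult_top\<close>)
  then have "Lp_pow (p + \<kappa> * r) v \<le> (\<integral>\<^sup>+x. ennreal c * g x \<partial>lborel)"
    unfolding Lp_pow_def by (intro nn_integral_mono)
  also have "\<dots> = ennreal c * gagliardo_pow s p v"
    unfolding gagliardo_pow_def g_def by (rule nn_integral_cmult) measurable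
  finally show ?thesis by (simp add: c_def)
qed

section \<open>Interpolation and truncation\<close>

lemma Lp_pow_interpolation:
  fixes v :: "'a::euclidean_space \<Rightarrow> real"
  assumes [measurable]: "v \<in> borel_measurable borel"
    and \<theta>: "0 < \<theta>" "\<theta> < 1"
    and A: "Lp_pow q v \<le> ennreal A" and Y: "Lp_pow t v \<le> ennreal Y"
  shows "Lp_pow (\<theta> * q + (1 - \<theta>) * t) v \<le> ennreal (A powr \<theta> * Y powr (1 - \<theta>))"
proof -
  have "Lp_pow (\<theta> * q + (1 - \<theta>) * t) v
      = (\<integral>\<^sup>+x. ennreal ((\<bar>v x\<bar> powr q) powr \<theta> * (\<bar>v x\<bar> powr t) powr (1 - \<theta>)) \<partial>lborel)"
    unfolding Lp_pow_def by (simp add: powr_powr powr_add mult_ac)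
  also have "\<dots> \<le> ennreal (A powr \<theta> * Y powr (1 - \<theta>))"
    using A Y \<theta> unfolding Lp_pow_def by (intro nn_integral_powr_mult_le) auto
  finally show ?thesis .
qed

lemma Lp_pow_finite_higher_if_bounded:
  fixes v :: "'a::euclidean_space \<Rightarrow> real"
  assumes [measurable]: "v \<in> borel_measurable borel"
    and M: "\<And>x. \<bar>v x\<bar> \<le> M" and q: "0 < q" and t: "q \<le> t" and fin: "Lp_pow q v < \<infinity>"
  shows "Lp_pow t v < \<infinity>"
proof -
  have "\<bar>v x\<bar> powr t \<le> M powr (t - q) * \<bar>v x\<bar> powr q" for x
  proof (cases "v x = 0")
    case False
    then have "\<bar>v x\<bar> powr t = \<bar>v x\<bar> powr (t - q) * \<bar>v x\<bar> powr q" by (simp add: powr_add[symmetric])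
    also have "\<dots> \<le> M powr (t - q) * \<bar>v x\<bar> powr q"
      using M[of x] t by (intro mult_right_mono powr_mono2) auto
    finally show ?thesis .
  qed simp
  then have "Lp_pow t v \<le> (\<integral>\<^sup>+x. ennreal (M powr (t - q)) * ennreal (\<bar>v x\<bar> powr q) \<partial>lborel)"
    unfolding Lp_pow_def by (intro nn_integral_mono) (simp add: ennreal_mult'[symmetric] ennreal_leI)
  also have "\<dots> = ennreal (M powr (t - q)) * Lp_pow q v"
    unfolding Lp_pow_def by (rule nn_integral_cmult) measurable
  also have "\<dots> < \<infinity>" using fin by (simp add: ennreal_mult_less_top)
  finally show ?thesis .
qed

lemma Lp_pow_le_interpolation_bound_bounded:
  fixes v :: "'a::euclidean_space \<Rightarrow> real" and p q r s \<kappa> \<theta> :: real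
  defines "C \<equiv> 2 powr (p + \<kappa> * r) * unit_ball_vol (real DIM('a)) powr (-1 - \<kappa>)"
  assumes [measurable]: "v \<in> borel_measurable borel" and M: "\<And>x. \<bar>v x\<bar> \<le> M"
    and p: "1 < p" and s: "0 < s" and q: "0 < q" "q \<le> r" and r: "1 < r"
    and \<kappa>: "\<kappa> = s * p / real DIM('a)"
    and \<theta>: "0 < \<theta>" "\<theta> < 1" "\<theta> * q + (1 - \<theta>) * (p + \<kappa> * r) = r" and \<kappa>\<theta>: "\<kappa> * (1 - \<theta>) < 1"
    and A: "Lp_pow q v \<le> ennreal A" "0 \<le> A" and V: "gagliardo_pow s p v \<le> ennreal V" "0 \<le> V"
  shows "Lp_pow r v \<le> ennreal ((A powr \<theta> * (C * V) powr (1 - \<theta>)) powr (1 / (1 - \<kappa> * (1 - \<theta>))))"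
proof -
  have C: "0 < C" by (simp add: C_def)
  have "Lp_pow q v < \<infinity>" by (rule le_less_trans[OF A(1)]) simp
  with M q have "Lp_pow r v < \<infinity>" by (intro Lp_pow_finite_higher_if_bounded[of v M q r]) auto
  then obtain X where X: "Lp_pow r v = ennreal X" "0 \<le> X" by (cases "Lp_pow r v") auto
  show ?thesis
  proof (cases "X = 0")
    case False
    with X have X0: "0 < X" by simp
    have "Lp_pow (p + \<kappa> * r) v \<le> ennreal (C * X powr \<kappa>) * gagliardo_pow s p v"
      using Lp_pow_le_gagliardo_pow[OF _ p s r, of v X] X0 X by (simp add: C_def \<kappa>)
    also have "\<dots> \<le> ennreal (C * X powr \<kappa> * V)"
      using V C by (simp add: ennreal_mult mult_left_mono)
    finally have Y: "Lp_pow (p + \<kappa> * r) v \<le> ennreal (C * X powr \<kappa> * V)" .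
    have "ennreal X \<le> ennreal (A powr \<theta> * (C * X powr \<kappa> * V) powr (1 - \<theta>))"
      using Lp_pow_interpolation[OF _ \<theta>(1,2) A(1) Y] X \<theta>(3) by simp
    then have "X \<le> A powr \<theta> * (C * X powr \<kappa> * V) powr (1 - \<theta>)"
      using A C V by (simp add: ennreal_le_iff)
    also have "\<dots> = A powr \<theta> * (C * V) powr (1 - \<theta>) * X powr (\<kappa> * (1 - \<theta>))"
      using C V X by (simp add: powr_mult powr_powr mult_ac)
    finally have "X \<le> (A powr \<theta> * (C * V) powr (1 - \<theta>)) powr (1 / (1 - \<kappa> * (1 - \<theta>)))"
      by (rule le_powr_of_le_mult_powr[OF X0 \<kappa>\<theta>])
    then show ?thesis using X by (simp add: ennreal_leI)
  qed (use X in simp)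
qed

definition clip :: "real \<Rightarrow> real \<Rightarrow> real" where
  "clip c t = max (-c) (min c t)"

lemma abs_clip: "0 \<le> c \<Longrightarrow> \<bar>clip c t\<bar> = min c \<bar>t\<bar>"
  by (auto simp: clip_def)

lemma abs_clip_diff_le: "\<bar>clip c t - clip c t'\<bar> \<le> \<bar>t - t'\<bar>"
  by (auto simp: clip_def)

lemma borel_measurable_clip [measurable]: "clip c \<in> borel_measurable borel"
  unfolding clip_def by measurable

lemma Lp_pow_clip_le: "0 \<le> c \<Longrightarrow> 0 \<le> q \<Longrightarrow> Lp_pow q (\<lambda>x. clip c (u x)) \<le> Lp_pow q u"
  unfolding Lp_pow_def by (intro nn_integral_mono ennreal_leI powr_mono2) (auto simp: abs_clip)

lemma gagliardo_pow_clip_le: "0 \<le> p \<Longrightarrow> gagliardo_pow s p (\<lambda>x. clip c (u x)) \<le> gagliardo_pow s p u"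
  unfolding gagliardo_pow_def
  by (intro nn_integral_mono ennreal_leI divide_right_mono powr_mono2) (auto simp: abs_clip_diff_le)

lemma Lp_pow_eq_SUP_clip:
  fixes u :: "'a::euclidean_space \<Rightarrow> real"
  assumes [measurable]: "u \<in> borel_measurable borel" and r: "0 < r"
  shows "Lp_pow r u = (SUP n. Lp_pow r (\<lambda>x. clip (real n) (u x)))"
proof -
  have "(SUP n. ennreal (\<bar>clip (real n) (u x)\<bar> powr r)) = ennreal (\<bar>u x\<bar> powr r)" for x
  proof (rule antisym)
    show "(SUP n. ennreal (\<bar>clip (real n) (u x)\<bar> powr r)) \<le> ennreal (\<bar>u x\<bar> powr r)"
      using r by (intro SUP_least ennreal_leI powr_mono2) (auto simp: abs_clip)
    obtain n :: nat where "\<bar>u x\<bar> \<le> real n" using real_arch_simple by blast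
    then have "ennreal (\<bar>u x\<bar> powr r) = ennreal (\<bar>clip (real n) (u x)\<bar> powr r)"
      by (simp add: abs_clip)
    also have "\<dots> \<le> (SUP n. ennreal (\<bar>clip (real n) (u x)\<bar> powr r))" by (rule SUP_upper) simp
    finally show "ennreal (\<bar>u x\<bar> powr r) \<le> \<dots>" .
  qed
  moreover have "incseq (\<lambda>n x. ennreal (\<bar>clip (real n) (u x)\<bar> powr r))"
    using r by (intro incseq_SucI le_funI ennreal_leI powr_mono2) (auto simp: abs_clip)
  ultimately show ?thesis
    unfolding Lp_pow_def by (simp add: nn_integral_monotone_convergence_SUP[symmetric])
qed

lemma Lp_pow_le_interpolation_bound:
  fixes u :: "'a::euclidean_space \<Rightarrow> real" and p q r s \<kappa> \<theta> :: real
  defines "C \<equiv> 2 powr (p + \<kappa> * r) * unit_ball_vol (real DIM('a)) powr (-1 - \<kappa>)"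
  assumes [measurable]: "u \<in> borel_measurable borel"
    and p: "1 < p" and s: "0 < s" and q: "0 < q" "q \<le> r" and r: "1 < r"
    and \<kappa>: "\<kappa> = s * p / real DIM('a)"
    and \<theta>: "0 < \<theta>" "\<theta> < 1" "\<theta> * q + (1 - \<theta>) * (p + \<kappa> * r) = r" and \<kappa>\<theta>: "\<kappa> * (1 - \<theta>) < 1"
    and A: "Lp_pow q u \<le> ennreal A" "0 \<le> A" and V: "gagliardo_pow s p u \<le> ennreal V" "0 \<le> V"
  shows "Lp_pow r u \<le> ennreal ((A powr \<theta> * (C * V) powr (1 - \<theta>)) powr (1 / (1 - \<kappa> * (1 - \<theta>))))"
proof -
  have "Lp_pow r (\<lambda>x. clip (real n) (u x)) \<le> ennreal ((A powr \<theta> * (C * V) powr (1 - \<theta>)) powr (1 / (1 - \<kappa> * (1 - \<theta>))))"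
    for n
    unfolding C_def
  proof (rule Lp_pow_le_interpolation_bound_bounded[OF _ _ p s q r \<kappa> \<theta> \<kappa>\<theta> _ A(2) _ V(2)])
    show "\<bar>clip (real n) (u x)\<bar> \<le> real n" for x by (simp add: abs_clip)
    show "Lp_pow q (\<lambda>x. clip (real n) (u x)) \<le> ennreal A"
      using Lp_pow_clip_le[of "real n" q u] q A by simp
    show "gagliardo_pow s p (\<lambda>x. clip (real n) (u x)) \<le> ennreal V"
      using gagliardo_pow_clip_le[of p s "real n" u] p V by simp
  qed simp
  then show ?thesis using r by (simp add: Lp_pow_eq_SUP_clip SUP_least)
qed

lemma fractional_GN_exponent_bounds:
  fixes p q r :: real
  assumes p: "1 < p" and pq: "p < q" and r: "r = p * (q - 1) / (p - 1)"
  shows "0 < q" "q < r" "1 < r"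
proof -
  have "(r - q) * (p - 1) = q - p" using p by (simp add: r field_simps)
  then have "q < r" using p pq by (smt (verit) mult_nonpos_nonneg)
  then show "0 < q" "q < r" "1 < r" using p pq by auto
qed

(* The upper bound on q is equivalent to r < p + (s p / D) r: the target exponent r lies strictly
   between q and the exponent reached by the pointwise estimate. *)
lemma fractional_GN_exponent_gap:
  fixes p q s D r :: real
  assumes p: "1 < p" and s: "0 < s" and sD: "s * p < D" and pq: "p < q"
    and qD: "q < p * (D - s) / (D - s * p)" and r: "r = p * (q - 1) / (p - 1)"
  shows "0 < D" "0 < D * p - (D - s * p) * q" "(D - s * p) * r < D * p"
proof -
  show D: "0 < D" using sD s p by (smt (verit) mult_pos_pos)
  have qD': "(D - s * p) * q < p * (D - s)" using qD sD by (simp add: field_simps)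
  moreover have "0 < p * s" using p s by simp
  ultimately show "0 < D * p - (D - s * p) * q" by (simp add: algebra_simps)
  have rp: "r * (p - 1) = p * (q - 1)" using p by (simp add: r)
  have "(D - s * p) * (q - 1) < D * (p - 1)" using qD' by (simp add: algebra_simps)
  then have "(D - s * p) * r * (p - 1) < (D * p) * (p - 1)"
    using p by (simp add: mult.assoc rp mult.left_commute[of _ p])
  then show "(D - s * p) * r < D * p" using p by simp
qed

lemma fractional_GN_interpolation_parameter:
  fixes p q s D r a :: real
  defines "\<kappa> \<equiv> s * p / D"
  assumes p: "1 < p" and s: "0 < s" and sD: "s * p < D" and pq: "p < q"
    and qD: "q < p * (D - s) / (D - s * p)"
    and r: "r = p * (q - 1) / (p - 1)"
    and a: "a = D * (q - p) / ((q - 1) * (D * p - (D - s * p) * q))"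
  obtains \<theta> where "0 < \<theta>" "\<theta> < 1" "\<theta> * q + (1 - \<theta>) * (p + \<kappa> * r) = r"
    "(1 - \<theta>) / (q * \<theta> + p * (1 - \<theta>)) = a / p"
proof -
  define r1 where "r1 = p + \<kappa> * r"
  define \<delta> where "\<delta> = D * p - (D - s * p) * q"
  define \<theta> where "\<theta> = (r1 - r) / (r1 - q)"
  have q: "0 < q" "q < r" "1 < r" using fractional_GN_exponent_bounds[OF p pq r] by auto
  obtain D: "0 < D" and \<delta>: "0 < \<delta>" and "(D - s * p) * r < D * p"
    using fractional_GN_exponent_gap[OF p s sD pq qD r] unfolding \<delta>_def by blast
  then have rr1: "r < r1" using D by (simp add: r1_def \<kappa>_def field_simps)
  then have r1q: "r1 - q \<noteq> 0" using q by simp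
  have om: "1 - \<theta> = (r - q) / (r1 - q)" using r1q by (simp add: \<theta>_def field_simps)
  have "q * \<theta> + p * (1 - \<theta>) = q + (p - q) * ((r - q) / (r1 - q))"
    unfolding om[symmetric] by (simp add: algebra_simps)
  also have "\<dots> = (q * (r1 - r) + p * (r - q)) / (r1 - q)"
    using r1q by (simp add: field_simps)
  finally have "(1 - \<theta>) / (q * \<theta> + p * (1 - \<theta>)) = (r - q) / (q * (r1 - r) + p * (r - q))"
    using r1q by (simp add: om)
  also have "q * (r1 - r) + p * (r - q) = \<delta> * r / D"
    using D by (simp add: r1_def \<kappa>_def \<delta>_def field_simps)
  also have "(r - q) / (\<delta> * r / D) = D * ((q - p) / (p - 1)) / (\<delta> * (p * (q - 1) / (p - 1)))"
    using p D by (simp add: r diff_divide_distrib[symmetric] field_simps)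
  also have "\<dots> = a / p"
  proof -
    have "p - 1 \<noteq> 0" "q - 1 \<noteq> 0" "\<delta> \<noteq> 0" "p \<noteq> 0" using p pq \<delta> by auto
    then show ?thesis by (simp add: a \<delta>_def[symmetric] divide_simps; algebra)
  qed
  moreover have "\<theta> * q + (1 - \<theta>) * (p + \<kappa> * r) = r1 - \<theta> * (r1 - q)"
    by (simp add: r1_def algebra_simps)
  moreover have "\<dots> = r" using r1q by (simp add: \<theta>_def)
  moreover have "0 < \<theta>" "\<theta> < 1" using q rr1 by (auto simp: \<theta>_def field_simps)
  ultimately show ?thesis using that by simp
qed

lemma interpolation_exponent_identities:
  fixes p q r \<kappa> \<theta> :: real
  assumes "0 < p" "0 < q" "0 < r" "0 < \<theta>" "\<theta> < 1"
    and conv: "\<theta> * q + (1 - \<theta>) * (p + \<kappa> * r) = r"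
    and a: "(1 - \<theta>) / (q * \<theta> + p * (1 - \<theta>)) = a / p"
  shows "\<kappa> * (1 - \<theta>) < 1" "\<theta> / ((1 - \<kappa> * (1 - \<theta>)) * r) = (1 - a) / q"
    "(1 - \<theta>) / ((1 - \<kappa> * (1 - \<theta>)) * r) = a / p"
proof -
  have E: "(1 - \<kappa> * (1 - \<theta>)) * r = q * \<theta> + p * (1 - \<theta>)"
    using conv by (simp add: algebra_simps)
  have "0 < q * \<theta> + p * (1 - \<theta>)" using assms by (intro add_pos_pos) auto
  then have "0 < (1 - \<kappa> * (1 - \<theta>)) * r" by (simp only: E)
  with \<open>0 < r\<close> show "\<kappa> * (1 - \<theta>) < 1" by (simp add: zero_less_mult_iff)
  show "(1 - \<theta>) / ((1 - \<kappa> * (1 - \<theta>)) * r) = a / p" using E a by simp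
  have "\<theta> / E = (1 - p * ((1 - \<theta>) / E)) / q" if "q * \<theta> + p * (1 - \<theta>) = E" "0 < E" for E
    using that \<open>0 < q\<close> by (simp add: field_simps)
  then have "\<theta> / (q * \<theta> + p * (1 - \<theta>)) = (1 - p * ((1 - \<theta>) / (q * \<theta> + p * (1 - \<theta>)))) / q"
    using \<open>0 < q * \<theta> + p * (1 - \<theta>)\<close> by blast
  then show "\<theta> / ((1 - \<kappa> * (1 - \<theta>)) * r) = (1 - a) / q" using E a \<open>0 < p\<close> by simp
qed

lemma fractional_GN_inequality:
  fixes p q s r a :: real and u :: "'a::euclidean_space \<Rightarrow> real"
  defines "K \<equiv> (2 powr (p + s * p / real DIM('a) * r)
    * unit_ball_vol (real DIM('a)) powr (-1 - s * p / real DIM('a))) powr (a / p)"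
  assumes p: "1 < p" and s: "0 < s" and sd: "s * p < real DIM('a)"
    and pq: "p < q" and qd: "q < p * (real DIM('a) - s) / (real DIM('a) - s * p)"
    and r: "r = p * (q - 1) / (p - 1)"
    and a: "a = real DIM('a) * (q - p) / ((q - 1) * (real DIM('a) * p - (real DIM('a) - s * p) * q))"
    and u: "u \<in> Dpqs p q s"
  shows "Lp_pow r u < \<infinity>" "Lp_norm r u \<le> K * (gagliardo s p u powr a * Lp_norm q u powr (1 - a))"
proof -
  define \<kappa> where "\<kappa> = s * p / real DIM('a)"
  define C where "C = 2 powr (p + \<kappa> * r) * unit_ball_vol (real DIM('a)) powr (-1 - \<kappa>)"
  define A where "A = enn2real (Lp_pow q u)"
  define V where "V = enn2real (gagliardo_pow s p u)"
  have q: "0 < q" "q < r" "1 < r" using fractional_GN_exponent_bounds[OF p pq r] by auto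
  obtain \<theta> where \<theta>: "0 < \<theta>" "\<theta> < 1" "\<theta> * q + (1 - \<theta>) * (p + \<kappa> * r) = r"
    and a_p: "(1 - \<theta>) / (q * \<theta> + p * (1 - \<theta>)) = a / p"
    using fractional_GN_interpolation_parameter[OF p s sd pq qd r a] unfolding \<kappa>_def by blast
  have "0 < p" "0 < r" using p q by auto
  note exps = interpolation_exponent_identities[OF this(1) q(1) this(2) \<theta> a_p]
  define e where "e = 1 - \<kappa> * (1 - \<theta>)"
  have [measurable]: "u \<in> borel_measurable borel" using u by (simp add: Dpqs_def Wsp_def)
  have "Lp_pow q u = ennreal A" "gagliardo_pow s p u = ennreal V"
    using u by (auto simp: A_def V_def Dpqs_def Wsp_def less_top[symmetric])
  then have bound: "Lp_pow r u \<le> ennreal ((A powr \<theta> * (C * V) powr (1 - \<theta>)) powr (1 / e))"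
    unfolding C_def e_def using p s q \<theta> exps(1)
    by (intro Lp_pow_le_interpolation_bound) (auto simp: \<kappa>_def A_def V_def)
  then show "Lp_pow r u < \<infinity>" by (rule le_less_trans) simp
  have "Lp_norm r u \<le> ((A powr \<theta> * (C * V) powr (1 - \<theta>)) powr (1 / e)) powr (1 / r)"
    unfolding Lp_norm_def using bound q by (intro powr_mono2 enn2real_leI) auto
  also have "\<dots> = A powr (\<theta> / (e * r)) * C powr ((1 - \<theta>) / (e * r)) * V powr ((1 - \<theta>) / (e * r))"
    by (simp add: C_def powr_mult powr_powr A_def V_def)
  also have "\<dots> = C powr (a / p) * ((V powr (1 / p)) powr a * (A powr (1 / q)) powr (1 - a))"
    using exps(2,3) by (simp add: e_def powr_powr A_def V_def mult_ac)
  finally show "Lp_norm r u \<le> K * (gagliardo s p u powr a * Lp_norm q u powr (1 - a))"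
    by (simp add: K_def C_def \<kappa>_def gagliardo_def Lp_norm_def A_def V_def)
qed

section \<open>Bounded Lipschitz functions with support of finite measure\<close>

definition near_far_power :: "real \<Rightarrow> real \<Rightarrow> real \<Rightarrow> real" where
  "near_far_power \<gamma> \<beta> \<rho> = (if \<rho> \<le> 1 then \<rho> powr (-\<gamma>) else \<rho> powr (-\<beta>))"

lemma near_far_power_nonneg: "0 \<le> near_far_power \<gamma> \<beta> \<rho>"
  by (simp add: near_far_power_def)

lemma borel_measurable_near_far_power [measurable]: "near_far_power \<gamma> \<beta> \<in> borel_measurable borel"
  unfolding near_far_power_def by measurable

lemma near_far_power_antimono:
  assumes "0 \<le> \<gamma>" "0 \<le> \<beta>" "0 < \<rho>" "\<rho> \<le> \<rho>'"
  shows "near_far_power \<gamma> \<beta> \<rho>' \<le> near_far_power \<gamma> \<beta> \<rho>"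
proof -
  have "\<rho>' powr (-\<beta>) \<le> 1" if "1 < \<rho>'" using that assms by (simp add: powr_minus inverse_le_1_iff ge_one_powr_ge_zero)
  moreover have "1 \<le> \<rho> powr (-\<gamma>)" if "\<rho> \<le> 1" using that assms by (simp add: powr_minus one_le_inverse_iff powr_le1)
  ultimately show ?thesis using assms by (auto simp: near_far_power_def intro!: powr_mono2')
qed

lemma near_far_power_eq_power:
  assumes "0 < n" "0 < \<rho>"
  shows "near_far_power \<gamma> \<beta> \<rho> = near_far_power (\<gamma> / n) (\<beta> / n) \<rho> ^ n"
  using assms by (simp add: near_far_power_def powr_realpow[symmetric] powr_powr)

(* The weight is infinite at the origin so that the bound of near_far_power by a product of
   one-dimensional weights also holds when a coordinate vanishes. *)
definition near_far_weight :: "real \<Rightarrow> real \<Rightarrow> real \<Rightarrow> ennreal" where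
  "near_far_weight c1 c2 t = (if t = 0 then \<infinity> else ennreal (near_far_power c1 c2 \<bar>t\<bar>))"

lemma borel_measurable_near_far_weight [measurable]: "near_far_weight c1 c2 \<in> borel_measurable borel"
  unfolding near_far_weight_def by measurable

lemma nn_integral_near_far_weight_finite:
  assumes c1: "c1 < 1" and c2: "1 < c2"
  shows "(\<integral>\<^sup>+t. near_far_weight c1 c2 t \<partial>lborel) < \<infinity>"
proof -
  define f where "f t = ennreal (t powr (-c1)) * indicator {0..1} t + ennreal (t powr (-c2)) * indicator {1..} t"
    for t :: real
  have [measurable]: "f \<in> borel_measurable borel" unfolding f_def by measurable
  have "((\<lambda>t. t powr (-c1)) has_integral (1 / (1 - c1))) {0..1::real}"
    using has_integral_powr_from_0[of "-c1" 1] c1 by simp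
  moreover have "((\<lambda>t. t powr (-c2)) has_integral (- (1 / (1 - c2)))) {1::real..}"
    using has_integral_powr_to_inf[of "-c2" 1] c2 by simp
  ultimately have f: "(\<integral>\<^sup>+t. f t \<partial>lborel) < \<infinity>"
    by (simp add: f_def nn_integral_add nn_integral_has_integral_lebesgue')
  have "AE t in lborel. near_far_weight c1 c2 t \<le> f t + f (-t)"
    using AE_lborel_singleton[of 0]
    by eventually_elim (auto simp: near_far_weight_def near_far_power_def f_def indicator_def)
  then have "(\<integral>\<^sup>+t. near_far_weight c1 c2 t \<partial>lborel) \<le> (\<integral>\<^sup>+t. f t + f (-t) \<partial>lborel)"
    by (rule nn_integral_mono_AE)
  also have "\<dots> = 2 * (\<integral>\<^sup>+t. f t \<partial>lborel)"
    using nn_integral_real_affine[of f "-1" 0] by (simp add: nn_integral_add mult_2)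
  finally show ?thesis using f by (simp add: ennreal_mult_less_top le_less_trans)
qed

lemma near_far_power_norm_le_prod:
  fixes h :: "'a::euclidean_space"
  assumes "0 \<le> \<gamma>" "0 \<le> \<beta>"
  shows "ennreal (near_far_power \<gamma> \<beta> (norm h))
    \<le> (\<Prod>b\<in>Basis. near_far_weight (\<gamma> / DIM('a)) (\<beta> / DIM('a)) (h \<bullet> b))"
proof (cases "\<exists>b\<in>Basis. h \<bullet> b = 0")
  case True
  have "near_far_weight c1 c2 t \<noteq> 0" for c1 c2 t
    by (auto simp: near_far_weight_def near_far_power_def)
  moreover have "near_far_weight c1 c2 0 = top" for c1 c2 by (simp add: near_far_weight_def)
  ultimately have "(\<Prod>b\<in>Basis. near_far_weight (\<gamma> / DIM('a)) (\<beta> / DIM('a)) (h \<bullet> b)) = top"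
    using True by (subst ennreal_prod_eq_top) (auto intro!: bexI)
  then show ?thesis by simp
next
  case False
  define c1 where "c1 = \<gamma> / DIM('a)"
  define c2 where "c2 = \<beta> / DIM('a)"
  have "0 \<le> c1" "0 \<le> c2" using assms by (simp_all add: c1_def c2_def)
  obtain b :: 'a where "b \<in> Basis" using nonempty_Basis by blast
  with False have "h \<noteq> 0" by auto
  then have h: "0 < norm h" by simp
  have "near_far_power \<gamma> \<beta> (norm h) = near_far_power c1 c2 (norm h) ^ DIM('a)"
    unfolding c1_def c2_def using h by (intro near_far_power_eq_power) auto
  also have "\<dots> = (\<Prod>b\<in>(Basis::'a set). near_far_power c1 c2 (norm h))" by simp
  also have "\<dots> \<le> (\<Prod>b\<in>Basis. near_far_power c1 c2 \<bar>h \<bullet> b\<bar>)"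
  proof (rule prod_mono)
    fix b :: 'a assume "b \<in> Basis"
    with False have "0 < \<bar>h \<bullet> b\<bar>" "\<bar>h \<bullet> b\<bar> \<le> norm h" by (auto simp: Basis_le_norm)
    with \<open>0 \<le> c1\<close> \<open>0 \<le> c2\<close> show "0 \<le> near_far_power c1 c2 (norm h) \<and> near_far_power c1 c2 (norm h) \<le> near_far_power c1 c2 \<bar>h \<bullet> b\<bar>"
      by (simp add: near_far_power_nonneg near_far_power_antimono)
  qed
  finally have "ennreal (near_far_power \<gamma> \<beta> (norm h)) \<le> (\<Prod>b\<in>Basis. ennreal (near_far_power c1 c2 \<bar>h \<bullet> b\<bar>))"
    by (simp add: prod_ennreal near_far_power_nonneg ennreal_leI)
  also have "\<dots> = (\<Prod>b\<in>Basis. near_far_weight c1 c2 (h \<bullet> b))"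
    using False by (intro prod.cong) (auto simp: near_far_weight_def)
  finally show ?thesis by (simp add: c1_def c2_def)
qed

lemma nn_integral_near_far_power_norm_finite:
  assumes "0 \<le> \<gamma>" "\<gamma> < real DIM('a)" "real DIM('a) < \<beta>"
  shows "(\<integral>\<^sup>+h. ennreal (near_far_power \<gamma> \<beta> (norm (h :: 'a::euclidean_space))) \<partial>lborel) < \<infinity>"
proof -
  have "(\<integral>\<^sup>+h. ennreal (near_far_power \<gamma> \<beta> (norm (h :: 'a))) \<partial>lborel)
      \<le> (\<integral>\<^sup>+h. (\<Prod>b\<in>(Basis::'a set). near_far_weight (\<gamma> / DIM('a)) (\<beta> / DIM('a)) (h \<bullet> b)) \<partial>lborel)"
    using assms by (intro nn_integral_mono near_far_power_norm_le_prod) auto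
  also have "\<dots> = (\<Prod>b\<in>(Basis::'a set). \<integral>\<^sup>+t. near_far_weight (\<gamma> / DIM('a)) (\<beta> / DIM('a)) t \<partial>lborel)"
    by (rule nn_integral_lborel_prod) auto
  also have "\<dots> < \<infinity>"
    using assms nn_integral_near_far_weight_finite[of "\<gamma> / DIM('a)" "\<beta> / DIM('a)"]
    by (simp add: power_less_top_ennreal)
  finally show ?thesis .
qed

lemma nn_integral_lborel_translate:
  fixes f :: "'a::euclidean_space \<Rightarrow> ennreal"
  assumes [measurable]: "f \<in> borel_measurable borel"
  shows "(\<integral>\<^sup>+x. f (x + c) \<partial>lborel) = (\<integral>\<^sup>+x. f x \<partial>lborel)"
  by (subst lborel_distr_plus[symmetric, of c]) (simp add: nn_integral_distr add.commute)

lemma nn_integral_lborel_reflect_translate: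
  fixes f :: "'a::euclidean_space \<Rightarrow> ennreal"
  assumes [measurable]: "f \<in> borel_measurable borel"
  shows "(\<integral>\<^sup>+y. f (x - y) \<partial>lborel) = (\<integral>\<^sup>+y. f y \<partial>lborel)"
proof -
  have "(\<integral>\<^sup>+y. f y \<partial>lborel) = (\<integral>\<^sup>+y. f (x + (-1) *\<^sub>R y) \<partial>lborel)"
    by (subst lborel_affine[of "-1" x]) (simp_all add: nn_integral_density nn_integral_distr)
  then show ?thesis by simp
qed

lemma nn_integral_support_kernel_finite:
  fixes k :: "'a::euclidean_space \<Rightarrow> ennreal"
  assumes [measurable]: "k \<in> borel_measurable borel" "K \<in> sets borel"
    and k: "(\<integral>\<^sup>+h. k h \<partial>lborel) < \<infinity>" and K: "emeasure lborel K < \<infinity>"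
  shows "(\<integral>\<^sup>+x. \<integral>\<^sup>+y. (indicator K x + indicator K y) * k (x - y) \<partial>lborel \<partial>lborel) < \<infinity>"
proof -
  define I where "I = (\<integral>\<^sup>+h. k h \<partial>lborel)"
  have "(\<integral>\<^sup>+x. k (x - y) \<partial>lborel) = I" "(\<integral>\<^sup>+y. k (x - y) \<partial>lborel) = I" for x y
    using nn_integral_lborel_translate[of k "-y"] nn_integral_lborel_reflect_translate[of k x]
    by (simp_all add: I_def)
  note I = this
  have "(\<integral>\<^sup>+x. \<integral>\<^sup>+y. (indicator K x + indicator K y) * k (x - y) \<partial>lborel \<partial>lborel)
      = (\<integral>\<^sup>+x. indicator K x * (\<integral>\<^sup>+y. k (x - y) \<partial>lborel) \<partial>lborel)
        + (\<integral>\<^sup>+x. \<integral>\<^sup>+y. indicator K y * k (x - y) \<partial>lborel \<partial>lborel)"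
    by (simp add: distrib_right nn_integral_add nn_integral_cmult)
  also have "(\<integral>\<^sup>+x. \<integral>\<^sup>+y. indicator K y * k (x - y) \<partial>lborel \<partial>lborel)
      = (\<integral>\<^sup>+y. indicator K y * (\<integral>\<^sup>+x. k (x - y) \<partial>lborel) \<partial>lborel)"
    by (subst lborel_pair.Fubini') (simp_all add: nn_integral_cmult)
  finally have "(\<integral>\<^sup>+x. \<integral>\<^sup>+y. (indicator K x + indicator K y) * k (x - y) \<partial>lborel \<partial>lborel)
      = emeasure lborel K * I + emeasure lborel K * I"
    by (simp add: I nn_integral_multc)
  then show ?thesis using k K by (simp add: I_def ennreal_mult_less_top)
qed

lemma gagliardo_integrand_le_near_far_power:
  fixes f :: "'a::euclidean_space \<Rightarrow> real" and s p :: real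
  defines "\<beta> \<equiv> real DIM('a) + s * p"
  assumes B: "\<And>x. \<bar>f x\<bar> \<le> B" and L: "L-lipschitz_on UNIV f" and p: "0 < p" and xy: "x \<noteq> y"
  shows "\<bar>f x - f y\<bar> powr p / norm (x - y) powr \<beta>
    \<le> max (L powr p) ((2 * B) powr p) * near_far_power (max (\<beta> - p) 0) \<beta> (norm (x - y))"
proof -
  define n where "n = norm (x - y)"
  have n: "0 < n" using xy by (simp add: n_def)
  have L0: "0 \<le> L" using L by (rule lipschitz_on_nonneg)
  show ?thesis
  proof (cases "n \<le> 1")
    case True
    have "\<bar>f x - f y\<bar> powr p \<le> (L * n) powr p"
      using lipschitz_on_normD[OF L, of x y] p by (intro powr_mono2) (auto simp: n_def)
    then have "\<bar>f x - f y\<bar> powr p / n powr \<beta> \<le> L powr p * n powr (-(\<beta> - p))"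
      using n L0 by (simp add: powr_mult powr_diff powr_minus divide_right_mono field_simps)
    also have "\<dots> \<le> max (L powr p) ((2 * B) powr p) * n powr (- max (\<beta> - p) 0)"
      using True n by (intro mult_mono powr_mono') (auto simp: le_max_iff_disj)
    finally show ?thesis using True by (simp add: near_far_power_def n_def)
  next
    case False
    have "\<bar>f x - f y\<bar> \<le> 2 * B" using B[of x] B[of y] by linarith
    then have "\<bar>f x - f y\<bar> powr p / n powr \<beta> \<le> (2 * B) powr p * n powr (-\<beta>)"
      using p n by (simp add: powr_minus divide_inverse mult_right_mono powr_mono2)
    also have "\<dots> \<le> max (L powr p) ((2 * B) powr p) * n powr (-\<beta>)" by (intro mult_right_mono) auto
    finally show ?thesis using False by (simp add: near_far_power_def n_def)
  qed
qed

lemma gagliardo_pow_finite_if_lipschitz: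
  fixes f :: "'a::euclidean_space \<Rightarrow> real"
  assumes [measurable]: "f \<in> borel_measurable borel" "K \<in> sets borel"
    and B: "\<And>x. \<bar>f x\<bar> \<le> B" and K: "\<And>x. x \<notin> K \<Longrightarrow> f x = 0" "emeasure lborel K < \<infinity>"
    and L: "L-lipschitz_on UNIV f" and p: "0 < p" and s: "0 < s" "s < 1"
  shows "gagliardo_pow s p f < \<infinity>"
proof -
  define \<beta> where "\<beta> = real DIM('a) + s * p"
  define C where "C = max (L powr p) ((2 * B) powr p)"
  define k where "k h = ennreal (near_far_power (max (\<beta> - p) 0) \<beta> (norm h))" for h :: 'a
  have C: "0 \<le> C" by (simp add: C_def le_max_iff_disj)
  have [measurable]: "k \<in> borel_measurable borel" unfolding k_def by measurable
  have "ennreal (\<bar>f x - f y\<bar> powr p / norm (x - y) powr \<beta>) \<le> ennreal C * ((indicator K x + indicator K y) * k (x - y))"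
    for x y
  proof (cases "x \<noteq> y \<and> (x \<in> K \<or> y \<in> K)")
    case True
    then have "ennreal (\<bar>f x - f y\<bar> powr p / norm (x - y) powr \<beta>) \<le> ennreal C * k (x - y)"
      using gagliardo_integrand_le_near_far_power[OF B L p, of x y s]
      by (simp add: k_def \<beta>_def C_def ennreal_mult[OF C[unfolded C_def] near_far_power_nonneg, symmetric] ennreal_leI)
    also have "\<dots> \<le> ennreal C * ((indicator K x + indicator K y) * k (x - y))"
      using True by (intro mult_left_mono) (auto simp: indicator_def mult_2 intro: add_increasing)
    finally show ?thesis .
  qed (auto simp: K)
  then have "gagliardo_pow s p f \<le> (\<integral>\<^sup>+x. \<integral>\<^sup>+y. ennreal C * ((indicator K x + indicator K y) * k (x - y)) \<partial>lborel \<partial>lborel)"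
    unfolding gagliardo_pow_def \<beta>_def by (intro nn_integral_mono)
  also have "\<dots> = ennreal C * (\<integral>\<^sup>+x. \<integral>\<^sup>+y. (indicator K x + indicator K y) * k (x - y) \<partial>lborel \<partial>lborel)"
    by (simp add: nn_integral_cmult)
  also have "\<dots> < \<infinity>"
  proof -
    have "(\<integral>\<^sup>+h. k h \<partial>lborel) < \<infinity>"
      unfolding k_def using p s by (intro nn_integral_near_far_power_norm_finite) (auto simp: \<beta>_def)
    with K(2) have "(\<integral>\<^sup>+x. \<integral>\<^sup>+y. (indicator K x + indicator K y) * k (x - y) \<partial>lborel \<partial>lborel) < \<infinity>"
      by (intro nn_integral_support_kernel_finite) auto
    then show ?thesis by (simp add: ennreal_mult_less_top)
  qed
  finally show ?thesis .
qed

lemma Lp_pow_finite_if_bounded_support: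
  fixes f :: "'a::euclidean_space \<Rightarrow> real"
  assumes [measurable]: "K \<in> sets borel"
    and B: "\<And>x. \<bar>f x\<bar> \<le> B" and K: "\<And>x. x \<notin> K \<Longrightarrow> f x = 0" "emeasure lborel K < \<infinity>" and t: "0 < t"
  shows "Lp_pow t f < \<infinity>"
proof -
  have "Lp_pow t f \<le> (\<integral>\<^sup>+x. ennreal (B powr t) * indicator K x \<partial>lborel)"
    unfolding Lp_pow_def using B K(1) t
    by (intro nn_integral_mono) (auto simp: indicator_def intro!: powr_mono2)
  also have "\<dots> < \<infinity>" using K(2) by (simp add: nn_integral_cmult_indicator ennreal_mult_less_top)
  finally show ?thesis .
qed

section \<open>A smooth bump function\<close>

lemma poly_times_exp_neg_tendsto_0:
  "((\<lambda>x::real. x ^ k * poly P x * exp (-x)) \<longlongrightarrow> 0) at_top"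
proof (induction P arbitrary: k)
  case (pCons a P)
  have "((\<lambda>x::real. x ^ k * exp (-x)) \<longlongrightarrow> 0) at_top" by real_asymp
  from tendsto_add[OF tendsto_mult_right_zero[OF this] pCons.IH[of "Suc k"]] show ?case
    by (simp add: algebra_simps)
qed simp

definition exp_recip_poly :: "real poly \<Rightarrow> real \<Rightarrow> real" where
  "exp_recip_poly P t = (if 0 < t then poly P (1 / t) * exp (-1 / t) else 0)"

(* d/dt (P(1/t) exp(-1/t)) = t^-2 (P - P')(1/t) exp(-1/t) *)
definition exp_recip_dpoly :: "real poly \<Rightarrow> real poly" where
  "exp_recip_dpoly P = [:0, 0, 1:] * (P - pderiv P)"

lemma exp_recip_poly_has_real_derivative_0: "(exp_recip_poly P has_real_derivative 0) (at 0)"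
proof -
  let ?q = "\<lambda>h. (exp_recip_poly P (0 + h) - exp_recip_poly P 0) / h"
  have "((\<lambda>x::real. x ^ 1 * poly P x * exp (-x)) \<longlongrightarrow> 0) at_top"
    by (rule poly_times_exp_neg_tendsto_0)
  then have "((\<lambda>h. inverse h ^ 1 * poly P (inverse h) * exp (- inverse h)) \<longlongrightarrow> 0) (at_right 0)"
    by (simp add: filterlim_at_top_to_right)
  then have "(?q \<longlongrightarrow> 0) (at_right 0)"
    by (rule Lim_transform_eventually)
      (auto simp: exp_recip_poly_def divide_inverse mult_ac intro: eventually_mono[OF eventually_at_right_less])
  moreover have "(?q \<longlongrightarrow> 0) (at_left 0)"
    by (rule tendsto_eventually, rule eventually_mono[OF eventually_at_left_real[of "-1" 0]])
      (auto simp: exp_recip_poly_def)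
  ultimately have "(?q \<longlongrightarrow> 0) (at 0)" by (simp add: filterlim_split_at_real)
  then show ?thesis by (simp add: DERIV_def)
qed

lemma exp_recip_poly_has_real_derivative:
  "(exp_recip_poly P has_real_derivative exp_recip_poly (exp_recip_dpoly P) t) (at t)"
proof -
  consider "0 < t" | "t < 0" | "t = 0" by linarith
  then show ?thesis
  proof cases
    case 1
    have "((\<lambda>t. poly P (1 / t) * exp (-1 / t)) has_real_derivative
        poly (pderiv P) (1 / t) * (-1 / t\<^sup>2) * exp (-1 / t) + poly P (1 / t) * (exp (-1 / t) * (1 / t\<^sup>2))) (at t)"
      using 1 by (auto intro!: derivative_eq_intros DERIV_chain2[OF poly_DERIV] simp: power2_eq_square)
    also have "poly (pderiv P) (1 / t) * (-1 / t\<^sup>2) * exp (-1 / t) + poly P (1 / t) * (exp (-1 / t) * (1 / t\<^sup>2))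
        = exp_recip_poly (exp_recip_dpoly P) t"
      using 1 by (simp add: exp_recip_poly_def exp_recip_dpoly_def power2_eq_square field_simps)
    finally show ?thesis
      by (rule has_field_derivative_transform_within_open[where S = "{0<..}"])
        (use 1 in \<open>auto simp: exp_recip_poly_def\<close>)
  next
    case 2
    have "((\<lambda>_. 0) has_real_derivative exp_recip_poly (exp_recip_dpoly P) t) (at t)"
      using 2 by (simp add: exp_recip_poly_def)
    then show ?thesis
      by (rule has_field_derivative_transform_within_open[where S = "{..<0}"])
        (use 2 in \<open>auto simp: exp_recip_poly_def\<close>)
  qed (simp add: exp_recip_poly_def exp_recip_poly_has_real_derivative_0)
qed

inductive elementary_smooth :: "('a::euclidean_space \<Rightarrow> real) \<Rightarrow> bool" where
  const: "elementary_smooth (\<lambda>x. c)"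
| inner: "elementary_smooth (\<lambda>x. x \<bullet> w)"
| add: "elementary_smooth f \<Longrightarrow> elementary_smooth g \<Longrightarrow> elementary_smooth (\<lambda>x. f x + g x)"
| mult: "elementary_smooth f \<Longrightarrow> elementary_smooth g \<Longrightarrow> elementary_smooth (\<lambda>x. f x * g x)"
| exp_recip_poly: "elementary_smooth f \<Longrightarrow> elementary_smooth (\<lambda>x. exp_recip_poly P (f x))"

lemma elementary_smooth_has_derivative:
  assumes "elementary_smooth f"
  obtains D where "\<And>x. (f has_derivative D x) (at x)" "\<And>v. elementary_smooth (\<lambda>x. D x v)"
  using assms
proof (induction arbitrary: thesis)
  case (const c)
  show ?case by (rule const.prems[of "\<lambda>x v. 0"]) (auto intro: elementary_smooth.const)
next
  case (inner w)
  show ?case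
    by (rule inner.prems[of "\<lambda>x v. v \<bullet> w"]) (auto intro!: derivative_eq_intros elementary_smooth.const)
next
  case (add f g)
  obtain Df Dg where "\<And>x. (f has_derivative Df x) (at x)" "\<And>v. elementary_smooth (\<lambda>x. Df x v)"
    "\<And>x. (g has_derivative Dg x) (at x)" "\<And>v. elementary_smooth (\<lambda>x. Dg x v)"
    using add.IH by metis
  then show ?case
    by (intro add.prems[of "\<lambda>x v. Df x v + Dg x v"] has_derivative_add elementary_smooth.add)
next
  case (mult f g)
  obtain Df Dg where "\<And>x. (f has_derivative Df x) (at x)" "\<And>v. elementary_smooth (\<lambda>x. Df x v)"
    "\<And>x. (g has_derivative Dg x) (at x)" "\<And>v. elementary_smooth (\<lambda>x. Dg x v)"
    using mult.IH by metis
  then show ?case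
    using mult.hyps
    by (intro mult.prems[of "\<lambda>x v. f x * Dg x v + Df x v * g x"] has_derivative_mult elementary_smooth.intros)
next
  case (exp_recip_poly f P)
  obtain Df where Df: "\<And>x. (f has_derivative Df x) (at x)" "\<And>v. elementary_smooth (\<lambda>x. Df x v)"
    using exp_recip_poly.IH by metis
  have "((\<lambda>x. exp_recip_poly P (f x)) has_derivative (\<lambda>v. exp_recip_poly (exp_recip_dpoly P) (f x) * Df x v)) (at x)"
    for x
    using has_derivative_compose[OF Df(1) exp_recip_poly_has_real_derivative[unfolded has_field_derivative_def]]
    by (simp add: o_def mult.commute)
  then show ?case
    using Df exp_recip_poly.hyps
    by (intro exp_recip_poly.prems[of "\<lambda>x v. exp_recip_poly (exp_recip_dpoly P) (f x) * Df x v"]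
        elementary_smooth.intros)
qed

lemma elementary_smooth_Ck_fun: "elementary_smooth f \<Longrightarrow> Ck_fun k f"
proof (induction k arbitrary: f)
  case 0
  then obtain D where "\<And>x. (f has_derivative D x) (at x)" "\<And>v. elementary_smooth (\<lambda>x. D x v)"
    by (metis elementary_smooth_has_derivative)
  then show ?case by (auto intro!: has_derivative_continuous continuous_at_imp_continuous_on)
next
  case (Suc k)
  then obtain D where D: "\<And>x. (f has_derivative D x) (at x)" "\<And>v. elementary_smooth (\<lambda>x. D x v)"
    by (metis elementary_smooth_has_derivative)
  then have "frechet_derivative f (at x) = D x" for x by (metis frechet_derivative_at)
  with D Suc.IH show ?case by (auto simp: differentiable_def)
qed

definition bump :: "'a::euclidean_space \<Rightarrow> real" where
  "bump x = exp_recip_poly 1 (1 - x \<bullet> x)"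

lemma elementary_smooth_bump: "elementary_smooth bump"
proof -
  have "elementary_smooth (\<lambda>x::'a. \<Sum>b\<in>B. (x \<bullet> b) * (x \<bullet> b))" if "finite B" for B :: "'a set"
    using that by induction (auto intro!: elementary_smooth.intros elementary_smooth.const[of 0, simplified])
  from this[OF finite_Basis] have "elementary_smooth (\<lambda>x::'a. x \<bullet> x)"
    by (simp add: euclidean_inner[symmetric])
  then have "elementary_smooth (\<lambda>x::'a. 1 + (-1) * (x \<bullet> x))"
    by (intro elementary_smooth.intros)
  from elementary_smooth.exp_recip_poly[OF this, of 1] show ?thesis
    by (simp add: bump_def[abs_def])
qed

lemma bump_eq_0: "1 \<le> norm x \<Longrightarrow> bump x = 0"
  by (simp add: bump_def exp_recip_poly_def dot_square_norm abs_square_less_1)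

lemma bump_pos: "norm x < 1 \<Longrightarrow> 0 < bump x"
  by (simp add: bump_def exp_recip_poly_def dot_square_norm power_less_one_iff)

lemma abs_bump_le_1: "\<bar>bump x\<bar> \<le> 1"
  by (simp add: bump_def exp_recip_poly_def)

lemma bump_in_Cc_infty: "bump \<in> Cc_infty"
proof -
  have "{x::'a. bump x \<noteq> 0} \<subseteq> cball 0 1" using bump_eq_0 by force
  then have "closure {x::'a. bump x \<noteq> 0} \<subseteq> cball 0 1" by (simp add: closure_minimal)
  then have "compact (closure {x::'a. bump x \<noteq> 0})"
    by (meson bounded_cball bounded_subset closed_closure compact_eq_bounded_closed)
  with elementary_smooth_Ck_fun[OF elementary_smooth_bump] show ?thesis
    by (auto simp: Cc_infty_def smooth_fun_def)
qed

lemma borel_measurable_bump [measurable]: "bump \<in> borel_measurable borel"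
  using elementary_smooth_Ck_fun[OF elementary_smooth_bump, of 0]
  by (intro borel_measurable_continuous_onI) simp

lemma exp_recip_poly_lipschitz:
  obtains B where "B-lipschitz_on {..1} (exp_recip_poly 1)"
proof -
  let ?f' = "exp_recip_poly (exp_recip_dpoly 1)"
  have "continuous_on {0..1} ?f'"
    using exp_recip_poly_has_real_derivative by (meson DERIV_isCont continuous_at_imp_continuous_on)
  then have "bounded (?f' ` {0..1})" by (intro compact_imp_bounded compact_continuous_image) auto
  then obtain B where "\<forall>y \<in> ?f' ` {0..1}. norm y \<le> B" by (auto simp: bounded_iff)
  then have B: "\<And>t. t \<in> {0..1} \<Longrightarrow> \<bar>?f' t\<bar> \<le> B" by simp
  have "\<bar>?f' t\<bar> \<le> max B 0" if "t \<in> {..1}" for t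
    using B[of t] that by (cases "0 \<le> t") (auto simp: exp_recip_poly_def)
  then have "\<bar>exp_recip_poly 1 x - exp_recip_poly 1 y\<bar> \<le> max B 0 * \<bar>x - y\<bar>" if "x \<in> {..1}" "y \<in> {..1}" for x y
    using field_differentiable_bound[of "{..1}" "exp_recip_poly 1" ?f' "max B 0" x y] that
      exp_recip_poly_has_real_derivative by (auto intro: has_field_derivative_at_within)
  then show ?thesis by (intro that[of "max B 0"] lipschitz_onI) (auto simp: dist_real_def)
qed

lemma bump_lipschitz:
  obtains L where "L-lipschitz_on UNIV (bump :: 'a::euclidean_space \<Rightarrow> real)"
proof -
  obtain B where B: "B-lipschitz_on {..1} (exp_recip_poly 1)" by (rule exp_recip_poly_lipschitz)
  have B0: "0 \<le> B" using B by (rule lipschitz_on_nonneg)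
  have "\<bar>bump x - bump y\<bar> \<le> max (3 * B) 2 * norm (x - y)" for x y :: 'a
  proof (cases "norm (x - y) \<le> 1 \<and> (norm x < 1 \<or> norm y < 1)")
    case True
    moreover have "norm x \<le> norm y + norm (x - y)" "norm y \<le> norm x + norm (x - y)"
      using norm_triangle_sub[of x y] norm_triangle_sub[of y x] by (auto simp: norm_minus_commute)
    ultimately have "norm x + norm y \<le> 3" by linarith
    have "\<bar>bump x - bump y\<bar> \<le> B * \<bar>(1 - x \<bullet> x) - (1 - y \<bullet> y)\<bar>"
      using lipschitz_onD[OF B, of "1 - x \<bullet> x" "1 - y \<bullet> y"] by (simp add: bump_def dist_real_def)
    also have "\<bar>(1 - x \<bullet> x) - (1 - y \<bullet> y)\<bar> = \<bar>(x - y) \<bullet> (x + y)\<bar>"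
      by (simp add: algebra_simps inner_commute)
    also have "\<dots> \<le> norm (x - y) * norm (x + y)" by (rule Cauchy_Schwarz_ineq2)
    also have "\<dots> \<le> norm (x - y) * 3"
      using \<open>norm x + norm y \<le> 3\<close> norm_triangle_ineq[of x y] by (intro mult_left_mono) auto
    finally have "\<bar>bump x - bump y\<bar> \<le> (3 * B) * norm (x - y)" using B0 by (simp add: mult_left_mono)
    also have "\<dots> \<le> max (3 * B) 2 * norm (x - y)" by (intro mult_right_mono) auto
    finally show ?thesis .
  next
    case False
    then consider "1 < norm (x - y)" | "bump x = 0" "bump y = 0" using bump_eq_0 by force
    then show ?thesis
    proof cases
      case 1
      have "\<bar>bump x - bump y\<bar> \<le> 2" using abs_bump_le_1[of x] abs_bump_le_1[of y] by linarith
      also have "\<dots> \<le> 2 * norm (x - y)" using 1 by simp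
      also have "\<dots> \<le> max (3 * B) 2 * norm (x - y)" by (intro mult_right_mono) auto
      finally show ?thesis .
    qed simp
  qed
  then show ?thesis using B0 by (intro that[of "max (3 * B) 2"] lipschitz_onI) (auto simp: dist_real_def dist_norm)
qed

lemma bump_not_AE_zero: "\<not> (AE x in lborel. (bump :: 'a::euclidean_space \<Rightarrow> real) x = 0)"
proof
  assume "AE x in lborel. (bump :: 'a \<Rightarrow> real) x = 0"
  then have "AE x in lborel. (x :: 'a) \<notin> ball 0 1"
    by eventually_elim (use bump_pos in force)
  then have "emeasure lborel (ball (0 :: 'a) 1) = 0"
    by (subst (asm) AE_iff_measurable[where N = "ball 0 1"]) auto
  then show False by (simp add: emeasure_ball)
qed

lemma bump_in_Dpqs:
  assumes p: "1 < p" and s: "0 < s" "s < 1" and q: "0 < q"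
  shows "(bump :: 'a::euclidean_space \<Rightarrow> real) \<in> Dpqs p q s"
proof -
  have supp: "\<And>x. x \<notin> cball 0 1 \<Longrightarrow> bump x = 0" by (auto intro!: bump_eq_0)
  obtain L where L: "L-lipschitz_on UNIV (bump :: 'a \<Rightarrow> real)" by (rule bump_lipschitz)
  have "Lp_pow t (bump :: 'a \<Rightarrow> real) < \<infinity>" if "0 < t" for t
    using that abs_bump_le_1 supp emeasure_lborel_cball_finite
    by (intro Lp_pow_finite_if_bounded_support[of "cball 0 1" bump 1 t]) auto
  moreover have "gagliardo_pow s p (bump :: 'a \<Rightarrow> real) < \<infinity>"
    using p s emeasure_lborel_cball_finite
    by (intro gagliardo_pow_finite_if_lipschitz[where K = "cball 0 1" and B = 1, OF _ _ abs_bump_le_1 supp _ L]) auto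
  moreover have "Lp_pow p (\<lambda>x::'a. bump x - bump x) = 0" "gagliardo_pow s p (\<lambda>x::'a. bump x - bump x) = 0"
    using p by (simp_all add: Lp_pow_def gagliardo_pow_def)
  ultimately show ?thesis
    using p q bump_in_Cc_infty bump_not_AE_zero
    by (auto simp: Dpqs_def Wsp_def intro!: exI[of _ "\<lambda>n. bump"])
qed

section \<open>The optimal constant\<close>

lemma Lp_norm_pos:
  fixes u :: "'a::euclidean_space \<Rightarrow> real"
  assumes [measurable]: "u \<in> borel_measurable lborel"
    and fin: "Lp_pow r u < \<infinity>" and nz: "\<not> (AE x in lborel. u x = 0)"
  shows "0 < Lp_norm r u"
proof -
  have "Lp_pow r u \<noteq> 0"
  proof
    assume "Lp_pow r u = 0"
    then have "AE x in lborel. \<bar>u x\<bar> powr r = 0"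
      by (intro AE_eq_0_if_nn_integral_le_nonpos[of _ _ 0]) (auto simp: Lp_pow_def)
    with nz show False by (auto elim: eventually_mono)
  qed
  with fin have "0 < enn2real (Lp_pow r u)"
    by (simp add: enn2real_positive_iff less_top zero_less_iff_neq_zero)
  then show ?thesis by (simp add: Lp_norm_def)
qed

lemma exists_least_constant:
  fixes N D :: "'b \<Rightarrow> real"
  assumes "S \<noteq> {}" and N: "\<And>u. u \<in> S \<Longrightarrow> 0 < N u" and D: "\<And>u. u \<in> S \<Longrightarrow> 0 \<le> D u"
    and K: "\<And>u. u \<in> S \<Longrightarrow> N u \<le> K * D u"
  shows "\<exists>L>0. (\<forall>u\<in>S. N u \<le> L * D u) \<and> (\<forall>L'. (\<forall>u\<in>S. N u \<le> L' * D u) \<longrightarrow> L \<le> L')"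
proof -
  have D_pos: "0 < D u" if "u \<in> S" for u
    using N[OF that] D[OF that] K[OF that] by (cases "D u = 0") auto
  have le_iff: "N u \<le> c * D u \<longleftrightarrow> N u / D u \<le> c" if "u \<in> S" for u c
    using D_pos[OF that] by (simp add: pos_divide_le_eq)
  define L where "L = (SUP u\<in>S. N u / D u)"
  have bdd: "bdd_above ((\<lambda>u. N u / D u) ` S)" using K le_iff by (auto intro!: bdd_aboveI[of _ K])
  have upper: "N u / D u \<le> L" if "u \<in> S" for u
    unfolding L_def using that bdd by (rule cSUP_upper)
  obtain u where "u \<in> S" using \<open>S \<noteq> {}\<close> by blast
  with N D_pos upper have "0 < L" by (meson divide_pos_pos order_less_le_trans)
  moreover have "L \<le> L'" if "\<forall>u\<in>S. N u \<le> L' * D u" for L'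
    unfolding L_def using \<open>S \<noteq> {}\<close> that le_iff by (intro cSUP_least) auto
  ultimately show ?thesis using upper le_iff by blast
qed

theorem theorem1p4:
  fixes p q s r a :: real
  assumes "p > 1" and "0 < s" and "s < 1" and "s * p < real DIM('a::euclidean_space)"
    and "p < q" and "q < p * (real DIM('a) - s) / (real DIM('a) - s * p)"
    and "r = p * (q - 1) / (p - 1)"
    and "a = real DIM('a) * (q - p) / ((q - 1) * (real DIM('a) * p - (real DIM('a) - s * p) * q))"
  shows "\<exists>L::real. 0 < L \<and>
    (\<forall>u \<in> (Dpqs p q s :: ('a \<Rightarrow> real) set). Lp_pow r u < \<infinity> \<and>
        Lp_norm r u \<le> L * gagliardo s p u powr a * Lp_norm q u powr (1 - a)) \<and>
    (\<forall>L'. (\<forall>u \<in> (Dpqs p q s :: ('a \<Rightarrow> real) set).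
        Lp_norm r u \<le> L' * gagliardo s p u powr a * Lp_norm q u powr (1 - a)) \<longrightarrow> L \<le> L')"
proof -
  let ?D = "Dpqs p q s :: ('a \<Rightarrow> real) set"
  note fin = fractional_GN_inequality(1)[OF assms(1,2,4-8)]
  note GN = fractional_GN_inequality(2)[OF assms(1,2,4-8)]
  have "bump \<in> ?D" using assms by (intro bump_in_Dpqs) auto
  then have "?D \<noteq> {}" by blast
  moreover have "0 < Lp_norm r u" if "u \<in> ?D" for u
    using that fin[OF that] by (intro Lp_norm_pos) (auto simp: Dpqs_def Wsp_def)
  ultimately have "\<exists>L>0. (\<forall>u\<in>?D. Lp_norm r u \<le> L * (gagliardo s p u powr a * Lp_norm q u powr (1 - a)))
      \<and> (\<forall>L'. (\<forall>u\<in>?D. Lp_norm r u \<le> L' * (gagliardo s p u powr a * Lp_norm q u powr (1 - a))) \<longrightarrow> L \<le> L')"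
    by (rule exists_least_constant[OF _ _ _ GN]) auto
  with fin show ?thesis by (auto simp: mult.assoc)
qed

end
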